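(* Let $\gamma(s)$ be a non-geodesic arc-length parametrized curve immersed in a BCV space $M(a,b)$ with $4a\neq b^2$, with Frenet frame $\{T,N,B\}$. Then $T_3=\langle T,E_3\rangle$ is constant if and only if $N_3=\langle N,E_3\rangle=0$.
   Context: For real $a,b$, the BCV space $M(a,b)$ is $\{(x,y,z)\in\mathbb{R}^3:\lambda_a=1+a(x^2+y^2)>0\}$ with the metric $$g_{a,b}=\frac{dx^2+dy^2}{[1+a(x^2+y^2)]^2}+\left(dz+\frac{b}{2}\,\frac{y\,dx-x\,dy}{1+a(x^2+y^2)}\right)^2,$$ and $E_3=\partial_z$. The Frenet frame of a curve with nowhere vanishing curvature $\kappa=\lVert\nabla_TT\rVert$ is given by $\nabla_TT=\kappa N$, $\nabla_TN=-\kappa T+\tau B$, $\nabla_TB=-\tau N$, where $\nabla$ is the Levi-Civita connection. *)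

theory Defs
  imports "HOL-Analysis.Analysis"
begin

definition bcv_lambda :: "real \<Rightarrow> real^3 \<Rightarrow> real" where
  "bcv_lambda a p = 1 + a * ((p$1)^2 + (p$2)^2)"

definition BCV_space :: "real \<Rightarrow> real \<Rightarrow> (real^3) set" where
  "BCV_space a b = {p. bcv_lambda a p > 0}"

definition bcv_omega :: "real \<Rightarrow> real \<Rightarrow> real^3 \<Rightarrow> real^3 \<Rightarrow> real" where
  "bcv_omega a b p u = u$3 + (b/2) * (p$2 * u$1 - p$1 * u$2) / bcv_lambda a p"

definition bcv_metric :: "real \<Rightarrow> real \<Rightarrow> real^3 \<Rightarrow> real^3 \<Rightarrow> real^3 \<Rightarrow> real" where
  "bcv_metric a b p u v =
     (u$1 * v$1 + u$2 * v$2) / (bcv_lambda a p)^2 + bcv_omega a b p u * bcv_omega a b p v"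

definition coord_vec :: "3 \<Rightarrow> real^3" where
  "coord_vec i = axis i 1"

definition E3 :: "real^3" where
  "E3 = axis 3 1"

definition bcv_gcomp :: "real \<Rightarrow> real \<Rightarrow> real^3 \<Rightarrow> real^3^3" where
  "bcv_gcomp a b p = (\<chi> i j. bcv_metric a b p (coord_vec i) (coord_vec j))"

definition bcv_ginv :: "real \<Rightarrow> real \<Rightarrow> real^3 \<Rightarrow> real^3^3" where
  "bcv_ginv a b p = matrix_inv (bcv_gcomp a b p)"

definition partial :: "3 \<Rightarrow> (real^3 \<Rightarrow> real) \<Rightarrow> real^3 \<Rightarrow> real" where
  "partial l f p = deriv (\<lambda>t. f (p + t *\<^sub>R coord_vec l)) 0"

definition bcv_christoffel :: "real \<Rightarrow> real \<Rightarrow> real^3 \<Rightarrow> 3 \<Rightarrow> 3 \<Rightarrow> 3 \<Rightarrow> real" where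
  "bcv_christoffel a b p k i j =
     (1/2) * (\<Sum>l\<in>UNIV. bcv_ginv a b p $ k $ l *
        (partial i (\<lambda>q. bcv_gcomp a b q $ j $ l) p
         + partial j (\<lambda>q. bcv_gcomp a b q $ i $ l) p
         - partial l (\<lambda>q. bcv_gcomp a b q $ i $ j) p))"

definition bcv_cov :: "real \<Rightarrow> real \<Rightarrow> (real \<Rightarrow> real^3) \<Rightarrow> (real \<Rightarrow> real^3) \<Rightarrow> real \<Rightarrow> real^3" where
  "bcv_cov a b \<gamma> V s =
     vector_derivative V (at s)
     + (\<chi> k. \<Sum>i\<in>UNIV. \<Sum>j\<in>UNIV. bcv_christoffel a b (\<gamma> s) k i j
             * (vector_derivative \<gamma> (at s)) $ i * V s $ j)"

end

theory Submission
  imports Defs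
begin

(* The metric coefficients of M(a,b) do not depend on z, i.e. E3 is a Killing field.  Lowering
   the Christoffel symbols against E3 therefore gives <Gamma(T,T), E3> = sum_ij d_i g_j3 T^i T^j,
   which is exactly the term produced by differentiating <T, E3> = sum_j g_j3(gamma) T^j along
   gamma.  Hence <T, E3>' = <nabla_T T, E3> = kappa <N, E3>, and as kappa vanishes nowhere on the
   interval, T3 is constant iff N3 = 0. *)

lemma matrix_inv_right:
  assumes "invertible A"
  shows "A ** matrix_inv A = mat 1"
  using assms unfolding invertible_def matrix_inv_def by (rule someI_ex[THEN conjunct1])

lemma linear_eq_sum_axis:
  fixes f :: "real^'n \<Rightarrow> real"
  assumes "linear f"
  shows "f v = (\<Sum>i\<in>UNIV. v $ i * f (axis i 1))"
proof -
  have "f v = f (\<Sum>i\<in>UNIV. v $ i *\<^sub>R axis i 1)"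
    using basis_expansion[of v] by (simp add: scalar_mult_eq_scaleR)
  then show ?thesis
    by (simp add: linear_sum[OF assms] linear_scale[OF assms])
qed

lemma partial_eq_derivative:
  assumes "(f has_derivative f') (at p)"
  shows "partial l f p = f' (axis l 1)"
proof -
  have line: "((\<lambda>t. p + t *\<^sub>R axis l 1) has_derivative (\<lambda>t. t *\<^sub>R axis l 1)) (at 0)"
    by (auto intro!: derivative_eq_intros)
  have "((\<lambda>t. f (p + t *\<^sub>R axis l 1)) has_derivative (\<lambda>t. f' (t *\<^sub>R axis l 1))) (at 0)"
    using diff_chain_at[OF line] assms by (simp add: o_def)
  moreover have "(\<lambda>t. f' (t *\<^sub>R axis l 1)) = (*) (f' (axis l 1))"
    using assms by (simp add: fun_eq_iff has_derivative_def linear_scale bounded_linear.linear)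
  ultimately have "((\<lambda>t. f (p + t *\<^sub>R axis l 1)) has_real_derivative f' (axis l 1)) (at 0)"
    by (simp add: has_field_derivative_def)
  then show ?thesis
    unfolding partial_def coord_vec_def by (rule DERIV_imp_deriv)
qed

lemma has_real_derivative_along_curve:
  fixes f :: "real^3 \<Rightarrow> real"
  assumes "(f has_derivative f') (at (\<gamma> s))" and "(\<gamma> has_vector_derivative v) (at s)"
  shows "((\<lambda>s. f (\<gamma> s)) has_real_derivative (\<Sum>i\<in>UNIV. v $ i * partial i f (\<gamma> s))) (at s)"
proof -
  have lin: "linear f'"
    using assms(1) by (simp add: has_derivative_def bounded_linear.linear)
  have "((\<lambda>s. f (\<gamma> s)) has_derivative (\<lambda>t. f' (t *\<^sub>R v))) (at s)"
    using diff_chain_at[OF assms(2)[unfolded has_vector_derivative_def] assms(1)] by (simp add: o_def)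
  moreover have "(\<lambda>t. f' (t *\<^sub>R v)) = (*) (\<Sum>i\<in>UNIV. v $ i * partial i f (\<gamma> s))"
    using linear_eq_sum_axis[OF lin, of v] partial_eq_derivative[OF assms(1)]
    by (simp add: fun_eq_iff linear_scale[OF lin])
  ultimately show ?thesis
    by (simp add: has_field_derivative_def)
qed

lemma constant_on_interval_iff_derivative_eq_0:
  fixes f f' :: "real \<Rightarrow> real"
  assumes "open I" "is_interval I"
    and deriv: "\<And>s. s \<in> I \<Longrightarrow> (f has_real_derivative f' s) (at s)"
  shows "(\<exists>c. \<forall>s\<in>I. f s = c) \<longleftrightarrow> (\<forall>s\<in>I. f' s = 0)"
proof
  assume "\<exists>c. \<forall>s\<in>I. f s = c"
  then obtain c where c: "\<And>s. s \<in> I \<Longrightarrow> f s = c" by blast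
  show "\<forall>s\<in>I. f' s = 0"
  proof
    fix s assume s: "s \<in> I"
    have "(f has_real_derivative 0) (at s)"
      using has_field_derivative_transform_within_open[OF DERIV_const \<open>open I\<close> s] c by metis
    then show "f' s = 0" using DERIV_unique deriv[OF s] by blast
  qed
next
  assume "\<forall>s\<in>I. f' s = 0"
  then have "\<And>s. s \<in> I \<Longrightarrow> (f has_real_derivative 0) (at s within I)"
    using deriv by (metis has_field_derivative_at_within)
  then show "\<exists>c. \<forall>s\<in>I. f s = c"
    using has_field_derivative_zero_constant[OF is_interval_convex[OF \<open>is_interval I\<close>]] by blast
qed

lemma linear_bcv_omega: "linear (bcv_omega a b p)"
  by (rule linearI) (simp_all add: bcv_omega_def algebra_simps add_divide_distrib diff_divide_distrib)

lemma bcv_metric_E3: "bcv_metric a b p u E3 = bcv_omega a b p u"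
  by (simp add: bcv_metric_def bcv_omega_def E3_def axis_def)

lemma bcv_gcomp_sym: "bcv_gcomp a b p $ i $ j = bcv_gcomp a b p $ j $ i"
  by (simp add: bcv_gcomp_def bcv_metric_def mult.commute)

lemma bcv_gcomp_col3: "bcv_gcomp a b p $ j $ 3 = bcv_omega a b p (axis j 1)"
  by (simp add: bcv_gcomp_def bcv_metric_E3 coord_vec_def flip: E3_def)

lemma bcv_omega_eq_sum_gcomp: "bcv_omega a b p u = (\<Sum>j\<in>UNIV. u $ j * bcv_gcomp a b p $ j $ 3)"
  unfolding bcv_gcomp_col3 by (rule linear_eq_sum_axis[OF linear_bcv_omega])

lemma bcv_omega_differentiable:
  assumes "bcv_lambda a p \<noteq> 0"
  shows "(\<lambda>q. bcv_omega a b q u) differentiable (at p)"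
proof -
  have "(\<lambda>q. q $ k) differentiable (at p)" for k :: 3
    by (rule bounded_linear_imp_differentiable[OF bounded_linear_vec_nth])
  then show ?thesis
    using assms unfolding bcv_omega_def bcv_lambda_def
    by (intro differentiable_add differentiable_const differentiable_divide differentiable_mult
        differentiable_diff differentiable_power) simp_all
qed

lemma partial_3_bcv_gcomp: "partial 3 (\<lambda>q. bcv_gcomp a b q $ i $ j) p = 0"
  by (simp add: partial_def bcv_gcomp_def bcv_metric_def bcv_omega_def bcv_lambda_def
      coord_vec_def axis_def)

lemma bcv_metric_eq_inner_gcomp: "bcv_metric a b p u v = u \<bullet> (bcv_gcomp a b p *v v)"
  by (simp add: inner_vec_def matrix_vector_mult_def sum_3 bcv_gcomp_def bcv_metric_def
      bcv_omega_def coord_vec_def axis_def algebra_simps add_divide_distrib diff_divide_distrib)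

lemma bcv_metric_self_eq_0_iff:
  assumes "bcv_lambda a p \<noteq> 0"
  shows "bcv_metric a b p u u = 0 \<longleftrightarrow> u = 0"
proof
  assume "bcv_metric a b p u u = 0"
  moreover have "0 \<le> (u$1 * u$1 + u$2 * u$2) / (bcv_lambda a p)^2" by simp
  moreover have "0 \<le> bcv_omega a b p u * bcv_omega a b p u" by simp
  ultimately have "(u$1 * u$1 + u$2 * u$2) / (bcv_lambda a p)^2 = 0"
      "bcv_omega a b p u * bcv_omega a b p u = 0"
    unfolding bcv_metric_def by linarith+
  then have "u$1 = 0" "u$2 = 0" "u$3 = 0"
    using assms by (simp_all add: bcv_omega_def)
  then show "u = 0" by (simp add: vec_eq_iff forall_3)
qed (simp add: bcv_metric_def bcv_omega_def)

lemma invertible_bcv_gcomp: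
  assumes "bcv_lambda a p \<noteq> 0"
  shows "invertible (bcv_gcomp a b p)"
proof -
  have "x = 0" if "bcv_gcomp a b p *v x = 0" for x
  proof -
    have "bcv_metric a b p x x = 0" using that by (simp add: bcv_metric_eq_inner_gcomp)
    then show "x = 0" using bcv_metric_self_eq_0_iff[OF assms] by blast
  qed
  then show ?thesis
    using matrix_left_invertible_ker invertible_left_inverse by blast
qed

lemma bcv_gcomp_ginv:
  assumes "bcv_lambda a p \<noteq> 0"
  shows "bcv_gcomp a b p ** bcv_ginv a b p = mat 1"
  unfolding bcv_ginv_def by (rule matrix_inv_right[OF invertible_bcv_gcomp[OF assms]])

lemma bcv_christoffel_lowered:
  assumes "bcv_lambda a p \<noteq> 0"
  shows "(\<Sum>k\<in>UNIV. bcv_gcomp a b p $ m $ k * bcv_christoffel a b p k i j) =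
    1/2 * (partial i (\<lambda>q. bcv_gcomp a b q $ j $ m) p + partial j (\<lambda>q. bcv_gcomp a b q $ i $ m) p
           - partial m (\<lambda>q. bcv_gcomp a b q $ i $ j) p)"
proof -
  define A where "A l = partial i (\<lambda>q. bcv_gcomp a b q $ j $ l) p
    + partial j (\<lambda>q. bcv_gcomp a b q $ i $ l) p - partial l (\<lambda>q. bcv_gcomp a b q $ i $ j) p" for l
  define G where "G = bcv_gcomp a b p"
  define G' where "G' = bcv_ginv a b p"
  have "(\<Sum>k\<in>UNIV. G $ m $ k * bcv_christoffel a b p k i j)
      = 1/2 * (\<Sum>k\<in>UNIV. \<Sum>l\<in>UNIV. G $ m $ k * G' $ k $ l * A l)"
    unfolding bcv_christoffel_def A_def[symmetric] G'_def[symmetric]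
    by (simp add: sum_distrib_left mult_ac)
  also have "\<dots> = 1/2 * (\<Sum>l\<in>UNIV. \<Sum>k\<in>UNIV. G $ m $ k * G' $ k $ l * A l)"
    by (subst sum.swap) (rule refl)
  also have "\<dots> = 1/2 * (\<Sum>l\<in>UNIV. (G ** G') $ m $ l * A l)"
    by (simp add: matrix_matrix_mult_def sum_distrib_right)
  also have "\<dots> = 1/2 * A m"
    unfolding G_def G'_def bcv_gcomp_ginv[OF assms] by (simp add: mat_def of_bool_def[symmetric])
  finally show ?thesis by (simp add: A_def G_def)
qed

lemma bcv_omega_christoffel:
  assumes "bcv_lambda a p \<noteq> 0"
  shows "bcv_omega a b p (\<chi> k. \<Sum>i\<in>UNIV. \<Sum>j\<in>UNIV. bcv_christoffel a b p k i j * v $ i * v $ j)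
    = (\<Sum>i\<in>UNIV. \<Sum>j\<in>UNIV. v $ i * v $ j * partial i (\<lambda>q. bcv_gcomp a b q $ j $ 3) p)"
proof -
  let ?\<Gamma> = "bcv_christoffel a b p" and ?G = "bcv_gcomp a b p"
  let ?dG = "\<lambda>i j. partial i (\<lambda>q. bcv_gcomp a b q $ j $ 3) p"
  have "bcv_omega a b p (\<chi> k. \<Sum>i\<in>UNIV. \<Sum>j\<in>UNIV. ?\<Gamma> k i j * v $ i * v $ j)
      = (\<Sum>k\<in>UNIV. ?G $ 3 $ k * (\<Sum>i\<in>UNIV. \<Sum>j\<in>UNIV. ?\<Gamma> k i j * v $ i * v $ j))"
    by (simp add: bcv_omega_eq_sum_gcomp bcv_gcomp_sym[of _ _ _ _ 3] mult.commute)
  also have "\<dots> = (\<Sum>i\<in>UNIV. \<Sum>j\<in>UNIV. (\<Sum>k\<in>UNIV. ?G $ 3 $ k * ?\<Gamma> k i j) * v $ i * v $ j)"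
    unfolding sum_3 by (simp add: algebra_simps)
  also have "\<dots> = (\<Sum>i\<in>UNIV. \<Sum>j\<in>UNIV. 1/2 * (?dG i j + ?dG j i) * v $ i * v $ j)"
    by (simp add: bcv_christoffel_lowered[OF assms] partial_3_bcv_gcomp)
  also have "\<dots> = (\<Sum>i\<in>UNIV. \<Sum>j\<in>UNIV. v $ i * v $ j * ?dG i j)"
    unfolding sum_3 by (simp add: algebra_simps)
  finally show ?thesis .
qed

lemma bcv_omega_tangent_has_derivative:
  assumes \<lambda>: "bcv_lambda a (\<gamma> s) \<noteq> 0"
    and \<gamma>': "(\<gamma> has_vector_derivative T s) (at s)"
    and T': "(T has_vector_derivative T') (at s)"
  shows "((\<lambda>s. bcv_omega a b (\<gamma> s) (T s)) has_real_derivative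
           bcv_omega a b (\<gamma> s) (bcv_cov a b \<gamma> T s)) (at s)"
proof -
  let ?g = "\<lambda>j q. bcv_gcomp a b q $ j $ 3"
  let ?dg = "\<lambda>i j. partial i (?g j) (\<gamma> s)"
  have dg: "((\<lambda>s. ?g j (\<gamma> s)) has_real_derivative (\<Sum>i\<in>UNIV. T s $ i * ?dg i j)) (at s)" for j
  proof -
    have "?g j differentiable (at (\<gamma> s))"
      unfolding bcv_gcomp_col3 by (rule bcv_omega_differentiable[OF \<lambda>])
    then show ?thesis
      using has_real_derivative_along_curve[OF _ \<gamma>'] frechet_derivative_works by blast
  qed
  have dT: "((\<lambda>s. T s $ j) has_real_derivative T' $ j) (at s)" for j
    using bounded_linear.has_vector_derivative[OF bounded_linear_vec_nth T']
    by (simp add: has_real_derivative_iff_has_vector_derivative)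
  have "((\<lambda>s. \<Sum>j\<in>UNIV. T s $ j * ?g j (\<gamma> s)) has_real_derivative
      (\<Sum>j\<in>UNIV. T s $ j * (\<Sum>i\<in>UNIV. T s $ i * ?dg i j) + T' $ j * ?g j (\<gamma> s))) (at s)"
    by (intro DERIV_sum DERIV_mult' dT dg)
  moreover have "bcv_omega a b (\<gamma> s) (bcv_cov a b \<gamma> T s)
      = (\<Sum>j\<in>UNIV. T s $ j * (\<Sum>i\<in>UNIV. T s $ i * ?dg i j) + T' $ j * ?g j (\<gamma> s))"
  proof -
    have "bcv_cov a b \<gamma> T s = T' + (\<chi> k. \<Sum>i\<in>UNIV. \<Sum>j\<in>UNIV.
        bcv_christoffel a b (\<gamma> s) k i j * T s $ i * T s $ j)"
      unfolding bcv_cov_def vector_derivative_at[OF \<gamma>'] vector_derivative_at[OF T'] ..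
    then have "bcv_omega a b (\<gamma> s) (bcv_cov a b \<gamma> T s)
        = bcv_omega a b (\<gamma> s) T' + (\<Sum>i\<in>UNIV. \<Sum>j\<in>UNIV. T s $ i * T s $ j * ?dg i j)"
      by (simp only: linear_add[OF linear_bcv_omega] bcv_omega_christoffel[OF \<lambda>])
    then show ?thesis
      by (simp add: bcv_omega_eq_sum_gcomp[of _ _ _ T'] sum_3 algebra_simps)
  qed
  ultimately show ?thesis
    by (simp add: bcv_omega_eq_sum_gcomp[of _ _ _ "T _"])
qed

theorem lemma4p7:
  fixes a b :: real
    and I :: "real set"
    and \<gamma> T N B :: "real \<Rightarrow> real^3"
    and \<kappa> \<tau> :: "real \<Rightarrow> real"
  assumes ab: "4 * a \<noteq> b^2"
    and I: "open I" "is_interval I" "I \<noteq> {}"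
    and in_M: "\<And>s. s \<in> I \<Longrightarrow> \<gamma> s \<in> BCV_space a b"
    and diff: "\<And>s. s \<in> I \<Longrightarrow> \<gamma> differentiable (at s)"
              "\<And>s. s \<in> I \<Longrightarrow> T differentiable (at s)"
              "\<And>s. s \<in> I \<Longrightarrow> N differentiable (at s)"
              "\<And>s. s \<in> I \<Longrightarrow> B differentiable (at s)"
    and T_def: "\<And>s. s \<in> I \<Longrightarrow> T s = vector_derivative \<gamma> (at s)"
    and arclen: "\<And>s. s \<in> I \<Longrightarrow> bcv_metric a b (\<gamma> s) (T s) (T s) = 1"
    and orthonormal:
      "\<And>s. s \<in> I \<Longrightarrow> bcv_metric a b (\<gamma> s) (N s) (N s) = 1"
      "\<And>s. s \<in> I \<Longrightarrow> bcv_metric a b (\<gamma> s) (B s) (B s) = 1"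
      "\<And>s. s \<in> I \<Longrightarrow> bcv_metric a b (\<gamma> s) (T s) (N s) = 0"
      "\<And>s. s \<in> I \<Longrightarrow> bcv_metric a b (\<gamma> s) (T s) (B s) = 0"
      "\<And>s. s \<in> I \<Longrightarrow> bcv_metric a b (\<gamma> s) (N s) (B s) = 0"
    and curv: "\<And>s. s \<in> I \<Longrightarrow>
       \<kappa> s = sqrt (bcv_metric a b (\<gamma> s) (bcv_cov a b \<gamma> T s) (bcv_cov a b \<gamma> T s))"
    and nongeod: "\<And>s. s \<in> I \<Longrightarrow> \<kappa> s \<noteq> 0"
    and frenet1: "\<And>s. s \<in> I \<Longrightarrow> bcv_cov a b \<gamma> T s = \<kappa> s *\<^sub>R N s"
    and frenet2: "\<And>s. s \<in> I \<Longrightarrow> bcv_cov a b \<gamma> N s = - \<kappa> s *\<^sub>R T s + \<tau> s *\<^sub>R B s"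
    and frenet3: "\<And>s. s \<in> I \<Longrightarrow> bcv_cov a b \<gamma> B s = - \<tau> s *\<^sub>R N s"
  shows "(\<exists>c. \<forall>s\<in>I. bcv_metric a b (\<gamma> s) (T s) E3 = c)
     \<longleftrightarrow> (\<forall>s\<in>I. bcv_metric a b (\<gamma> s) (N s) E3 = 0)"
proof -
  have "((\<lambda>s. bcv_metric a b (\<gamma> s) (T s) E3) has_real_derivative
          \<kappa> s * bcv_metric a b (\<gamma> s) (N s) E3) (at s)" if s: "s \<in> I" for s
  proof -
    have "bcv_lambda a (\<gamma> s) \<noteq> 0"
      using in_M[OF s] by (simp add: BCV_space_def)
    moreover have "(\<gamma> has_vector_derivative T s) (at s)"
      using diff(1)[OF s] T_def[OF s] by (simp add: vector_derivative_works)
    moreover have "(T has_vector_derivative vector_derivative T (at s)) (at s)"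
      using diff(2)[OF s] by (simp add: vector_derivative_works)
    ultimately have "((\<lambda>s. bcv_omega a b (\<gamma> s) (T s)) has_real_derivative
        bcv_omega a b (\<gamma> s) (bcv_cov a b \<gamma> T s)) (at s)"
      by (rule bcv_omega_tangent_has_derivative)
    then show ?thesis
      by (simp add: bcv_metric_E3 frenet1[OF s] linear_scale[OF linear_bcv_omega])
  qed
  then have "(\<exists>c. \<forall>s\<in>I. bcv_metric a b (\<gamma> s) (T s) E3 = c)
      \<longleftrightarrow> (\<forall>s\<in>I. \<kappa> s * bcv_metric a b (\<gamma> s) (N s) E3 = 0)"
    by (rule constant_on_interval_iff_derivative_eq_0[OF I(1,2)])
  then show ?thesis
    using nongeod by simp
qed

end
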